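(* Let $h>0$, let $r\in\{2,4,8,16\}$, let $j\in\{1,\dots,r-1\}$ and put $\theta=j/r$. Place a hanging node at $P=(x_c,y_c)$ and consider the seven points $$A_\pm=(x_c-\theta h,\;y_c\pm h),\quad B_\pm=(x_c+(1-\theta)h,\;y_c\pm h),\quad C=(x_c-\theta h,\;y_c),\quad D=(x_c+(1-\theta)h,\;y_c),\quad P.$$ Define the seven-point scheme for $\Delta u=f$ $$\alpha_{A}\big(U_{A_+}+U_{A_-}\big)+\alpha_{B}\big(U_{B_+}+U_{B_-}\big)+\alpha_C U_C+\alpha_D U_D+\alpha_P U_P=\beta_C f_C+\beta_D f_D,$$ with $$h^2\alpha_A=\frac{2-\theta}{3},\quad h^2\alpha_B=\frac{1+\theta}{3},\quad h^2\alpha_C=\frac{2}{\theta}-\frac43+\frac{2\theta}{3},\quad h^2\alpha_D=\frac{2}{1-\theta}-\frac43+\frac{2(1-\theta)}{3},\quad h^2\alpha_P=-\frac{2}{\theta(1-\theta)},$$ $$\beta_C=\frac{2-\theta}{3},\qquad \beta_D=\frac{1+\theta}{3}$$ (all other weights of $f$, including the one at $P$, are zero). Then: (i) $\beta_C+\beta_D=1$, $\beta_C,\beta_D>0$, all of $\alpha_A,\alpha_B,\alpha_C,\alpha_D$ are positive and $\alpha_P<0$ with $\alpha_P=-(2\alpha_A+2\alpha_B+\alpha_C+\alpha_D)$; (ii) replacing $j$ by $r-j$ (i.e. $\theta$ by $1-\theta$) exchanges the roles of the left points $A_\pm,C$ and the right points $B_\pm,D$ (the coefficients appear in reverse order), and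 the coefficients depend on $j,r$ only through $j/r$; (iii) the scheme is exact for every polynomial $p(x,y)$ of total degree at most $4$ whose coefficients of $x^4$ and of $y^4$ vanish, i.e. for such $p$, $$\alpha_A\big(p(A_+)+p(A_-)\big)+\alpha_B\big(p(B_+)+p(B_-)\big)+\alpha_C p(C)+\alpha_D p(D)+\alpha_P p(P)=\beta_C\,\Delta p(C)+\beta_D\,\Delta p(D).$$
   Context: Setting: a two-grid Cartesian discretization of the Poisson equation $\Delta u=f$ with a coarse mesh of size $h$ and a fine mesh of size $h/r$. A hanging node is a fine-grid point lying on a coarse grid line strictly between two consecutive coarse grid points; here the coarse grid points are at $x=x_c-\theta h$ and $x=x_c+(1-\theta)h$ on the line $y=y_c$, and the neighboring coarse lines are $y=y_c\pm h$. $U_Q$ denotes the discrete approximation of $u(Q)$ and $f_Q=f(Q)$. *)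

theory Defs
  imports "HOL-Analysis.Analysis"
begin

definition theta :: "nat \<Rightarrow> nat \<Rightarrow> real" where
  "theta j r = real j / real r"

definition alphaA :: "real \<Rightarrow> nat \<Rightarrow> nat \<Rightarrow> real" where
  "alphaA h j r = ((2 - theta j r) / 3) / h\<^sup>2"

definition alphaB :: "real \<Rightarrow> nat \<Rightarrow> nat \<Rightarrow> real" where
  "alphaB h j r = ((1 + theta j r) / 3) / h\<^sup>2"

definition alphaC :: "real \<Rightarrow> nat \<Rightarrow> nat \<Rightarrow> real" where
  "alphaC h j r = (2 / theta j r - 4/3 + 2 * theta j r / 3) / h\<^sup>2"

definition alphaD :: "real \<Rightarrow> nat \<Rightarrow> nat \<Rightarrow> real" where
  "alphaD h j r = (2 / (1 - theta j r) - 4/3 + 2 * (1 - theta j r) / 3) / h\<^sup>2"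

definition alphaP :: "real \<Rightarrow> nat \<Rightarrow> nat \<Rightarrow> real" where
  "alphaP h j r = (- 2 / (theta j r * (1 - theta j r))) / h\<^sup>2"

definition betaC :: "nat \<Rightarrow> nat \<Rightarrow> real" where
  "betaC j r = (2 - theta j r) / 3"

definition betaD :: "nat \<Rightarrow> nat \<Rightarrow> real" where
  "betaD j r = (1 + theta j r) / 3"

definition laplacian :: "(real \<Rightarrow> real \<Rightarrow> real) \<Rightarrow> real \<Rightarrow> real \<Rightarrow> real" where
  "laplacian f x y =
     deriv (\<lambda>s. deriv (\<lambda>t. f t y) s) x + deriv (\<lambda>s. deriv (\<lambda>t. f x t) s) y"

definition poly2 :: "(nat \<Rightarrow> nat \<Rightarrow> real) \<Rightarrow> real \<Rightarrow> real \<Rightarrow> real" where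
  "poly2 c x y = (\<Sum>i\<le>4. \<Sum>k\<le>4. c i k * x ^ i * y ^ k)"

definition scheme_lhs ::
  "real \<Rightarrow> nat \<Rightarrow> nat \<Rightarrow> (real \<Rightarrow> real \<Rightarrow> real) \<Rightarrow> real \<Rightarrow> real \<Rightarrow> real" where
  "scheme_lhs h j r U xc yc =
     (let \<theta> = theta j r in
       alphaA h j r * (U (xc - \<theta> * h) (yc + h) + U (xc - \<theta> * h) (yc - h))
     + alphaB h j r * (U (xc + (1 - \<theta>) * h) (yc + h) + U (xc + (1 - \<theta>) * h) (yc - h))
     + alphaC h j r * U (xc - \<theta> * h) yc
     + alphaD h j r * U (xc + (1 - \<theta>) * h) yc
     + alphaP h j r * U xc yc)"

definition scheme_rhs ::
  "real \<Rightarrow> nat \<Rightarrow> nat \<Rightarrow> (real \<Rightarrow> real \<Rightarrow> real) \<Rightarrow> real \<Rightarrow> real \<Rightarrow> real" where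
  "scheme_rhs h j r f xc yc =
     (let \<theta> = theta j r in
       betaC j r * f (xc - \<theta> * h) yc + betaD j r * f (xc + (1 - \<theta>) * h) yc)"

end

theory Submission
  imports Defs
begin

text \<open>For \<open>0 < \<theta> < 1\<close> the outer weights are positive, since
  \<open>h\<^sup>2\<alpha>\<^sub>C = (2(\<theta>-1)\<^sup>2 + 4)/(3\<theta>)\<close> and \<open>\<alpha>\<^sub>D\<close> is the same expression in \<open>1 - \<theta>\<close>; \<open>\<alpha>\<^sub>P\<close> is
  the negative of their sum, as exactness on constants demands. Exactness on the thirteen
  admissible monomials \<open>x\<^sup>iy\<^sup>k\<close> reduces, after multiplying the scheme by \<open>3\<theta>(1-\<theta>)h\<^sup>2\<close>,
  to a polynomial identity in \<open>\<theta>, h, x\<^sub>c, y\<^sub>c\<close> and the coefficients of the polynomial.\<close>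

lemma theta_nonneg: "0 \<le> theta j r"
  unfolding theta_def by simp

lemma theta_pos_lt_1:
  assumes "0 < j" "j < r"
  shows "0 < theta j r" "theta j r < 1"
  using assms unfolding theta_def by simp_all

lemma theta_complement:
  assumes "j \<le> r" "0 < r"
  shows "theta (r - j) r = 1 - theta j r"
  using assms unfolding theta_def by (simp add: of_nat_diff field_simps)

lemma betaC_add_betaD: "betaC j r + betaD j r = 1"
  unfolding betaC_def betaD_def by (simp add: field_simps)

lemma betaC_pos: "theta j r < 2 \<Longrightarrow> 0 < betaC j r"
  unfolding betaC_def by simp

lemma betaD_pos: "0 < betaD j r"
  unfolding betaD_def using theta_nonneg[of j r] by simp

lemma alphaA_pos: "theta j r < 2 \<Longrightarrow> h \<noteq> 0 \<Longrightarrow> 0 < alphaA h j r"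
  unfolding alphaA_def by simp

lemma alphaB_pos: "h \<noteq> 0 \<Longrightarrow> 0 < alphaB h j r"
  unfolding alphaB_def using theta_nonneg[of j r] by simp

lemma edge_weight_pos:
  fixes s :: real
  assumes "0 < s"
  shows "0 < 2 / s - 4/3 + 2 * s / 3"
proof -
  have "2 / s - 4/3 + 2 * s / 3 = (2 * (s - 1)\<^sup>2 + 4) / (3 * s)"
    using assms by (simp add: field_simps power2_eq_square)
  also have "\<dots> > 0"
    using assms by (intro divide_pos_pos add_nonneg_pos) simp_all
  finally show ?thesis .
qed

lemma alphaC_pos: "0 < theta j r \<Longrightarrow> h \<noteq> 0 \<Longrightarrow> 0 < alphaC h j r"
  unfolding alphaC_def by (intro divide_pos_pos edge_weight_pos) simp_all

lemma alphaD_pos: "theta j r < 1 \<Longrightarrow> h \<noteq> 0 \<Longrightarrow> 0 < alphaD h j r"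
  unfolding alphaD_def by (intro divide_pos_pos edge_weight_pos) simp_all

lemma alphaP_neg: "0 < theta j r \<Longrightarrow> theta j r < 1 \<Longrightarrow> h \<noteq> 0 \<Longrightarrow> alphaP h j r < 0"
  unfolding alphaP_def by (simp add: divide_neg_pos)

lemma alphaP_eq:
  assumes "theta j r \<noteq> 0" "theta j r \<noteq> 1"
  shows "alphaP h j r = - (2 * alphaA h j r + 2 * alphaB h j r + alphaC h j r + alphaD h j r)"
proof -
  define t where "t = theta j r"
  have "t \<noteq> 0" "1 - t \<noteq> 0"
    using assms unfolding t_def by simp_all
  then have "-2 / (t * (1 - t)) =
      - (2 * ((2 - t) / 3) + 2 * ((1 + t) / 3) + (2 / t - 4/3 + 2 * t / 3)
         + (2 / (1 - t) - 4/3 + 2 * (1 - t) / 3))"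
    by (simp add: field_simps)
  moreover have "- (2 * alphaA h j r + 2 * alphaB h j r + alphaC h j r + alphaD h j r) =
      - (2 * ((2 - t) / 3) + 2 * ((1 + t) / 3) + (2 / t - 4/3 + 2 * t / 3)
         + (2 / (1 - t) - 4/3 + 2 * (1 - t) / 3)) / h\<^sup>2"
    unfolding alphaA_def alphaB_def alphaC_def alphaD_def t_def
    by (simp only: times_divide_eq_right add_divide_distrib[symmetric] minus_divide_left)
  ultimately show ?thesis
    unfolding alphaP_def t_def by simp
qed

lemma coefficients_complement:
  assumes "j \<le> r" "0 < r"
  shows "alphaA h (r - j) r = alphaB h j r" "alphaB h (r - j) r = alphaA h j r"
    "alphaC h (r - j) r = alphaD h j r" "alphaD h (r - j) r = alphaC h j r"
    "alphaP h (r - j) r = alphaP h j r"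
    "betaC (r - j) r = betaD j r" "betaD (r - j) r = betaC j r"
  unfolding alphaA_def alphaB_def alphaC_def alphaD_def alphaP_def betaC_def betaD_def
    theta_complement[OF assms]
  by (simp_all add: algebra_simps)

lemma coefficients_depend_on_theta:
  assumes "theta j' r' = theta j r"
  shows "alphaA h j' r' = alphaA h j r" "alphaB h j' r' = alphaB h j r"
    "alphaC h j' r' = alphaC h j r" "alphaD h j' r' = alphaD h j r"
    "alphaP h j' r' = alphaP h j r"
    "betaC j' r' = betaC j r" "betaD j' r' = betaD j r"
  unfolding alphaA_def alphaB_def alphaC_def alphaD_def alphaP_def betaC_def betaD_def assms
  by simp_all

lemma deriv2_quartic:
  "deriv (\<lambda>s. deriv (\<lambda>t. a + b*t + c*t^2 + d*t^3 + e*t^4) s) (x::real) = 2*c + 6*d*x + 12*e*x^2"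
proof -
  have first: "deriv (\<lambda>t. a + b*t + c*t^2 + d*t^3 + e*t^4) u = b + 2*c*u + 3*d*u^2 + 4*e*u^3"
    for u :: real
    by (rule DERIV_imp_deriv) (auto intro!: derivative_eq_intros simp: power2_eq_square power3_eq_cube)
  show ?thesis
    unfolding first
    by (rule DERIV_imp_deriv) (auto intro!: derivative_eq_intros simp: power2_eq_square)
qed

lemma poly2_in_x:
  "poly2 c x y = (\<Sum>k\<le>4. c 0 k * y^k) + (\<Sum>k\<le>4. c 1 k * y^k) * x
    + (\<Sum>k\<le>4. c 2 k * y^k) * x^2 + (\<Sum>k\<le>4. c 3 k * y^k) * x^3 + (\<Sum>k\<le>4. c 4 k * y^k) * x^4"
  unfolding poly2_def by (simp add: numeral_eq_Suc atMost_Suc sum_distrib_right algebra_simps)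

lemma poly2_in_y:
  "poly2 c x y = (\<Sum>i\<le>4. c i 0 * x^i) + (\<Sum>i\<le>4. c i 1 * x^i) * y
    + (\<Sum>i\<le>4. c i 2 * x^i) * y^2 + (\<Sum>i\<le>4. c i 3 * x^i) * y^3 + (\<Sum>i\<le>4. c i 4 * x^i) * y^4"
  unfolding poly2_def by (simp add: numeral_eq_Suc atMost_Suc sum_distrib_right algebra_simps)

lemma laplacian_poly2:
  "laplacian (poly2 c) x y =
     2 * (\<Sum>k\<le>4. c 2 k * y^k) + 6 * (\<Sum>k\<le>4. c 3 k * y^k) * x + 12 * (\<Sum>k\<le>4. c 4 k * y^k) * x^2
   + 2 * (\<Sum>i\<le>4. c i 2 * x^i) + 6 * (\<Sum>i\<le>4. c i 3 * x^i) * y + 12 * (\<Sum>i\<le>4. c i 4 * x^i) * y^2"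
  unfolding laplacian_def poly2_in_x[of c _ y] poly2_in_y[of c x] deriv2_quartic by simp

lemma poly2_expand:
  assumes "\<forall>i k. 4 < i + k \<longrightarrow> c i k = 0" "c 4 0 = 0" "c 0 4 = 0"
  shows "poly2 c x y = c 0 0 + c 1 0 * x + c 0 1 * y + c 2 0 * x^2 + c 1 1 * x * y + c 0 2 * y^2
    + c 3 0 * x^3 + c 2 1 * x^2 * y + c 1 2 * x * y^2 + c 0 3 * y^3
    + c 3 1 * x^3 * y + c 2 2 * x^2 * y^2 + c 1 3 * x * y^3"
  using assms unfolding poly2_def by (simp add: numeral_eq_Suc atMost_Suc)

lemma laplacian_poly2_expand:
  assumes "\<forall>i k. 4 < i + k \<longrightarrow> c i k = 0" "c 4 0 = 0" "c 0 4 = 0"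
  shows "laplacian (poly2 c) x y = 2 * c 2 0 + 2 * c 2 1 * y + 2 * c 2 2 * y^2 + 6 * c 3 0 * x
    + 6 * c 3 1 * x * y + 2 * c 0 2 + 2 * c 1 2 * x + 2 * c 2 2 * x^2 + 6 * c 0 3 * y + 6 * c 1 3 * x * y"
  using assms unfolding laplacian_poly2 by (simp add: numeral_eq_Suc atMost_Suc algebra_simps)

lemma seven_point_identity_cleared:
  fixes t h xc yc :: real
  assumes P: "\<And>x y. P x y = c00 + c10 * x + c01 * y + c20 * x^2 + c11 * x * y + c02 * y^2
      + c30 * x^3 + c21 * x^2 * y + c12 * x * y^2 + c03 * y^3
      + c31 * x^3 * y + c22 * x^2 * y^2 + c13 * x * y^3"
    and L: "\<And>x y. L x y = 2 * c20 + 2 * c21 * y + 2 * c22 * y^2 + 6 * c30 * x + 6 * c31 * x * y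
      + 2 * c02 + 2 * c12 * x + 2 * c22 * x^2 + 6 * c03 * y + 6 * c13 * x * y"
  shows "(2 - t) * t * (1 - t) * (P (xc - t * h) (yc + h) + P (xc - t * h) (yc - h))
    + (1 + t) * t * (1 - t) * (P (xc + (1 - t) * h) (yc + h) + P (xc + (1 - t) * h) (yc - h))
    + (6 * (1 - t) - 4 * t * (1 - t) + 2 * t^2 * (1 - t)) * P (xc - t * h) yc
    + (6 * t - 4 * t * (1 - t) + 2 * t * (1 - t)^2) * P (xc + (1 - t) * h) yc
    + - 6 * P xc yc
    = t * (1 - t) * h^2 * (2 - t) * L (xc - t * h) yc + t * (1 - t) * h^2 * (1 + t) * L (xc + (1 - t) * h) yc"
  unfolding P L by algebra

lemma scheme_exact_poly2:
  assumes "theta j r \<noteq> 0" "theta j r \<noteq> 1" "h \<noteq> 0"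
    and "\<forall>i k. 4 < i + k \<longrightarrow> c i k = 0" "c 4 0 = 0" "c 0 4 = 0"
  shows "scheme_lhs h j r (poly2 c) xc yc = scheme_rhs h j r (laplacian (poly2 c)) xc yc"
proof -
  define t where "t = theta j r"
  define K where "K = 3 * t * (1 - t) * h\<^sup>2"
  have "t \<noteq> 0" "1 - t \<noteq> 0"
    using assms(1,2) unfolding t_def by simp_all
  have weights:
    "alphaA h j r = (2 - t) * t * (1 - t) / K" "alphaB h j r = (1 + t) * t * (1 - t) / K"
    "alphaC h j r = (6 * (1 - t) - 4 * t * (1 - t) + 2 * t^2 * (1 - t)) / K"
    "alphaD h j r = (6 * t - 4 * t * (1 - t) + 2 * t * (1 - t)^2) / K"
    "alphaP h j r = - 6 / K"
    "betaC j r = t * (1 - t) * h^2 * (2 - t) / K" "betaD j r = t * (1 - t) * h^2 * (1 + t) / K"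
    using \<open>t \<noteq> 0\<close> \<open>1 - t \<noteq> 0\<close> assms(3)
    unfolding alphaA_def alphaB_def alphaC_def alphaD_def alphaP_def betaC_def betaD_def K_def t_def
    by (simp_all add: field_simps power2_eq_square)
  (* collecting over K turns both sides verbatim into those of the cleared identity,
     which is why it is stated with + - 6 and with the factors of L multiplied out *)
  show ?thesis
    unfolding scheme_lhs_def scheme_rhs_def Let_def weights t_def[symmetric]
      times_divide_eq_left add_divide_distrib[symmetric]
      seven_point_identity_cleared[OF poly2_expand[OF assms(4-6)] laplacian_poly2_expand[OF assms(4-6)]]
    ..
qed

theorem mainTheorem2:
  fixes h xc yc :: real and r j :: nat
  assumes hpos: "h > 0"
    and r: "r \<in> {2, 4, 8, 16}"
    and j: "1 \<le> j" "j \<le> r - 1"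
  shows
    "(betaC j r + betaD j r = 1 \<and> betaC j r > 0 \<and> betaD j r > 0 \<and>
      alphaA h j r > 0 \<and> alphaB h j r > 0 \<and> alphaC h j r > 0 \<and> alphaD h j r > 0 \<and>
      alphaP h j r < 0 \<and>
      alphaP h j r = - (2 * alphaA h j r + 2 * alphaB h j r + alphaC h j r + alphaD h j r))
   \<and> (alphaA h (r - j) r = alphaB h j r \<and> alphaB h (r - j) r = alphaA h j r \<and>
      alphaC h (r - j) r = alphaD h j r \<and> alphaD h (r - j) r = alphaC h j r \<and>
      alphaP h (r - j) r = alphaP h j r \<and>
      betaC (r - j) r = betaD j r \<and> betaD (r - j) r = betaC j r)
   \<and> (\<forall>j' r'. r' > 0 \<and> real j' / real r' = real j / real r \<longrightarrow>
        alphaA h j' r' = alphaA h j r \<and> alphaB h j' r' = alphaB h j r \<and>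
        alphaC h j' r' = alphaC h j r \<and> alphaD h j' r' = alphaD h j r \<and>
        alphaP h j' r' = alphaP h j r \<and>
        betaC j' r' = betaC j r \<and> betaD j' r' = betaD j r)
   \<and> (\<forall>c :: nat \<Rightarrow> nat \<Rightarrow> real.
        (\<forall>i k. 4 < i + k \<longrightarrow> c i k = 0) \<and> c 4 0 = 0 \<and> c 0 4 = 0 \<longrightarrow>
        scheme_lhs h j r (poly2 c) xc yc = scheme_rhs h j r (laplacian (poly2 c)) xc yc)"
proof -
  have "0 < j" "j < r"
    using r j by auto
  then have \<theta>: "0 < theta j r" "theta j r < 1"
    by (rule theta_pos_lt_1)+
  have "h \<noteq> 0"
    using hpos by simp
  have "j \<le> r" "0 < r"
    using \<open>j < r\<close> by simp_all
  note reflection = coefficients_complement[OF this]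
  show ?thesis
    unfolding reflection theta_def[symmetric]
    using \<theta> \<open>h \<noteq> 0\<close>
    by (intro conjI allI impI refl betaC_add_betaD betaC_pos betaD_pos alphaA_pos alphaB_pos
        alphaC_pos alphaD_pos alphaP_neg alphaP_eq coefficients_depend_on_theta scheme_exact_poly2)
      simp_all
qed

end
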